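(* Let $K$ be a field and $\mathcal A$ an algebraic division algebra over $K$ (e.g. an algebraic field extension of $K$), regarded as a left $\mathcal A$-module via left multiplication. Let $J$ be a $K$-subspace of $\mathcal A$ and fix any choice of $\vartheta$. (i) If $J=0$ or $J=\mathcal A$, then $\sigma_\vartheta(J)=\tau_\vartheta(J)=\mathcal A$. (ii) If $J$ is nonzero and proper, then $\sigma_\vartheta(J)=\{0\}$ and $\tau_\vartheta(J)=(\mathcal A\setminus J)\cup\{0\}$.
   Context: For an associative unital algebra $\mathcal A$ over a commutative ring (here a field $K$), the symbol $\vartheta$ ranges over "left", "right", "pre-two-sided", "two-sided". A subspace $J\subseteq\mathcal A$ is a left (resp. right; two-sided) Mathieu subspace of $\mathcal A$ if whenever $a\in\mathcal A$ satisfies $a^m\in J$ for all $m\ge1$, then for all $b,c\in\mathcal A$ there is $N_0$ with $ba^m\in J$ (resp. $a^mc\in J$; $ba^mc\in J$) for all $m\ge N_0$; pre-two-sided means both left and right. A $\vartheta$-ideal means a left/right/two-sided ideal accordingly, and a two-sided ideal for $\vartheta$ = pre-two-sided. For a left $\mathcal A$-module $\mathcal M$, $u\in\mathcal M$, $N\subseteq \mathcal M$, $(N:u)=\{a\in\mathcal A: au\in N\}$; for a subspace $N$, $\sigma_\vartheta(N)=\{u\in\mathcal M: (N:u)\text{ is a }\vartheta\text{-ideal of }\mathcal A\}$, $\tau_\vartheta(N)=\{u\in\mathcal M: (N:u)\text{ is a }\vartheta\text{-Mathieu subspace of }\mathcal A\}$. A $K$-algebra is algebraic if every element satisfies a nonzero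 polynomial over $K$. *)

theory Defs
  imports Main "HOL-Computational_Algebra.Polynomial"
begin

datatype theta = Left | Right | PreTwoSided | TwoSided

definition is_K_algebra :: "('k::field \<Rightarrow> 'a::ring_1 \<Rightarrow> 'a) \<Rightarrow> bool" where
  "is_K_algebra scale \<longleftrightarrow> vector_space scale \<and>
     (\<forall>k a b. scale k (a * b) = scale k a * b \<and> scale k (a * b) = a * scale k b)"

definition algebraic_algebra :: "('k::field \<Rightarrow> 'a::ring_1 \<Rightarrow> 'a) \<Rightarrow> bool" where
  "algebraic_algebra scale \<longleftrightarrow>
     (\<forall>a::'a. \<exists>p::'k poly. p \<noteq> 0 \<and> (\<Sum>i\<le>degree p. scale (coeff p i) (a ^ i)) = 0)"

definition left_ideal :: "'a::ring_1 set \<Rightarrow> bool" where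
  "left_ideal I \<longleftrightarrow> 0 \<in> I \<and> (\<forall>x\<in>I. \<forall>y\<in>I. x + y \<in> I) \<and> (\<forall>r. \<forall>x\<in>I. r * x \<in> I)"

definition right_ideal :: "'a::ring_1 set \<Rightarrow> bool" where
  "right_ideal I \<longleftrightarrow> 0 \<in> I \<and> (\<forall>x\<in>I. \<forall>y\<in>I. x + y \<in> I) \<and> (\<forall>r. \<forall>x\<in>I. x * r \<in> I)"

definition theta_ideal :: "theta \<Rightarrow> 'a::ring_1 set \<Rightarrow> bool" where
  "theta_ideal th I = (case th of
      Left \<Rightarrow> left_ideal I
    | Right \<Rightarrow> right_ideal I
    | PreTwoSided \<Rightarrow> left_ideal I \<and> right_ideal I
    | TwoSided \<Rightarrow> left_ideal I \<and> right_ideal I)"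

definition left_mathieu :: "('k::field \<Rightarrow> 'a::ring_1 \<Rightarrow> 'a) \<Rightarrow> 'a set \<Rightarrow> bool" where
  "left_mathieu scale J \<longleftrightarrow> module.subspace scale J \<and>
     (\<forall>a. (\<forall>m\<ge>1. a ^ m \<in> J) \<longrightarrow> (\<forall>b. \<exists>N0. \<forall>m\<ge>N0. b * a ^ m \<in> J))"

definition right_mathieu :: "('k::field \<Rightarrow> 'a::ring_1 \<Rightarrow> 'a) \<Rightarrow> 'a set \<Rightarrow> bool" where
  "right_mathieu scale J \<longleftrightarrow> module.subspace scale J \<and>
     (\<forall>a. (\<forall>m\<ge>1. a ^ m \<in> J) \<longrightarrow> (\<forall>c. \<exists>N0. \<forall>m\<ge>N0. a ^ m * c \<in> J))"

definition two_sided_mathieu :: "('k::field \<Rightarrow> 'a::ring_1 \<Rightarrow> 'a) \<Rightarrow> 'a set \<Rightarrow> bool" where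
  "two_sided_mathieu scale J \<longleftrightarrow> module.subspace scale J \<and>
     (\<forall>a. (\<forall>m\<ge>1. a ^ m \<in> J) \<longrightarrow> (\<forall>b c. \<exists>N0. \<forall>m\<ge>N0. b * a ^ m * c \<in> J))"

definition theta_mathieu :: "theta \<Rightarrow> ('k::field \<Rightarrow> 'a::ring_1 \<Rightarrow> 'a) \<Rightarrow> 'a set \<Rightarrow> bool" where
  "theta_mathieu th scale J = (case th of
      Left \<Rightarrow> left_mathieu scale J
    | Right \<Rightarrow> right_mathieu scale J
    | PreTwoSided \<Rightarrow> left_mathieu scale J \<and> right_mathieu scale J
    | TwoSided \<Rightarrow> two_sided_mathieu scale J)"

text \<open>(N:u) for the left module A over itself (action = left multiplication).\<close>
definition colon :: "'a::ring_1 set \<Rightarrow> 'a \<Rightarrow> 'a set" where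
  "colon N u = {a. a * u \<in> N}"

definition sigma_set :: "theta \<Rightarrow> 'a::ring_1 set \<Rightarrow> 'a set" where
  "sigma_set th N = {u. theta_ideal th (colon N u)}"

definition tau_set :: "theta \<Rightarrow> ('k::field \<Rightarrow> 'a::ring_1 \<Rightarrow> 'a) \<Rightarrow> 'a set \<Rightarrow> 'a set" where
  "tau_set th scale N = {u. theta_mathieu th scale (colon N u)}"

end

theory Submission
  imports Defs
begin

(*
  In a division algebra A every nonzero u is a unit, so the colon set
  (J:u) = J u^-1 is a copy of J: it is {0}, A, or nonzero and proper exactly when J is.
  Over a division ring the only theta-ideals are {0} and A, which settles sigma.
  For tau the decisive fact is algebraic: if a subspace L contains all positive powers
  of a nonzero element a, then 1 is in L (cancel the lowest power of a from a
  polynomial relation of a).  Hence if u is not in J, then 1 is not in (J:u), only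
  a = 0 has all its powers in (J:u), and (J:u) is trivially Mathieu; if 0 /= u is in J,
  then 1 lies in the proper subspace (J:u) and the powers of 1 violate the Mathieu
  condition.
*)

lemma is_K_algebra_module: "is_K_algebra scale \<Longrightarrow> module scale"
  unfolding is_K_algebra_def module_iff_vector_space by blast

lemma theta_ideal_trivial:
  assumes "L = {0} \<or> L = (UNIV :: 'a::ring_1 set)"
  shows "theta_ideal th L"
  using assms by (cases th) (auto simp: theta_ideal_def left_ideal_def right_ideal_def)

text \<open>In a division ring a theta-ideal with a nonzero element x is everything, since
  every y equals (y x^-1) x and x (x^-1 y).\<close>

lemma theta_ideal_division_ring:
  fixes L :: "'a::division_ring set"
  assumes ideal: "theta_ideal th L" and nonzero: "L \<noteq> {0}"
  shows "L = UNIV"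
proof -
  have "0 \<in> L"
    using ideal by (cases th) (auto simp: theta_ideal_def left_ideal_def right_ideal_def)
  then obtain x where x: "x \<in> L" "x \<noteq> 0" using nonzero by blast
  have one_sided: "left_ideal L \<or> right_ideal L"
    using ideal by (cases th) (auto simp: theta_ideal_def)
  have "y \<in> L" for y
    using one_sided
  proof
    assume "left_ideal L"
    moreover have "(y * inverse x) * x = y" using x(2) by (simp add: mult.assoc)
    ultimately show ?thesis using x(1) unfolding left_ideal_def by metis
  next
    assume "right_ideal L"
    moreover have "x * (inverse x * y) = y" using x(2) by (simp add: mult.assoc[symmetric])
    ultimately show ?thesis using x(1) unfolding right_ideal_def by metis
  qed
  then show ?thesis by blast
qed

lemma theta_mathieu_if_absorbing:
  fixes scale :: "'k::field \<Rightarrow> 'a::ring_1 \<Rightarrow> 'a"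
  assumes sub: "module.subspace scale L"
    and absorb: "\<And>a b c m. \<forall>m\<ge>1. a ^ m \<in> L \<Longrightarrow> m \<ge> 1 \<Longrightarrow> b * a ^ m * c \<in> L"
  shows "theta_mathieu th scale L"
proof -
  have "two_sided_mathieu scale L"
    unfolding two_sided_mathieu_def using sub absorb by blast
  moreover have "left_mathieu scale L"
    unfolding left_mathieu_def using sub absorb[where c = 1] by auto
  moreover have "right_mathieu scale L"
    unfolding right_mathieu_def using sub absorb[where b = 1] by fastforce
  ultimately show ?thesis by (cases th) (auto simp: theta_mathieu_def)
qed

lemma theta_mathieu_if_only_zero_powers:
  fixes scale :: "'k::field \<Rightarrow> 'a::ring_1 \<Rightarrow> 'a"
  assumes "module scale" and sub: "module.subspace scale L"
    and only_zero: "\<And>a. \<forall>m\<ge>1. a ^ m \<in> L \<Longrightarrow> a = 0"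
  shows "theta_mathieu th scale L"
proof (rule theta_mathieu_if_absorbing[OF sub])
  fix a b c :: 'a and m :: nat
  assume "\<forall>m\<ge>1. a ^ m \<in> L" and "m \<ge> 1"
  moreover have "0 \<in> L" using module.subspace_0[OF \<open>module scale\<close> sub] .
  ultimately show "b * a ^ m * c \<in> L" using only_zero[of a] by (simp add: zero_power)
qed

lemma theta_mathieu_trivial:
  fixes scale :: "'k::field \<Rightarrow> 'a::ring_1 \<Rightarrow> 'a"
  assumes "module scale" and trivial: "L = {0} \<or> L = UNIV"
  shows "theta_mathieu th scale L"
  using trivial
proof
  assume "L = {0}"
  moreover have "\<forall>m\<ge>1. a ^ m \<in> {0} \<Longrightarrow> a = 0" for a :: 'a
    by (metis power_one_right order_refl singletonD)
  ultimately show ?thesis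
    using theta_mathieu_if_only_zero_powers[OF \<open>module scale\<close>]
      module.subspace_single_0[OF \<open>module scale\<close>] by blast
next
  assume "L = UNIV"
  then show ?thesis
    using theta_mathieu_if_absorbing module.subspace_UNIV[OF \<open>module scale\<close>] by blast
qed

text \<open>A proper subspace containing 1 is not Mathieu for any theta: all powers of 1 lie
  in L, but multiplying them by an element outside L leaves L.\<close>

lemma not_theta_mathieu_if_one:
  fixes scale :: "'k::field \<Rightarrow> 'a::ring_1 \<Rightarrow> 'a"
  assumes one: "1 \<in> L" and outside: "y \<notin> L"
  shows "\<not> theta_mathieu th scale L"
proof -
  have powers: "\<forall>m\<ge>1. (1::'a) ^ m \<in> L" using one by simp
  have "\<not> left_mathieu scale L"
    unfolding left_mathieu_def using powers outside by (metis mult_1_right order_refl power_one)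
  moreover have "\<not> right_mathieu scale L"
    unfolding right_mathieu_def using powers outside by (metis mult_1_left order_refl power_one)
  moreover have "\<not> two_sided_mathieu scale L"
    unfolding two_sided_mathieu_def using powers outside
    by (metis mult_1_left order_refl power_one)
  ultimately show ?thesis by (cases th) (auto simp: theta_mathieu_def)
qed

text \<open>Since scalars commute past right multiplication by u, (J:u) is again a subspace.\<close>

lemma colon_subspace:
  fixes scale :: "'k::field \<Rightarrow> 'a::ring_1 \<Rightarrow> 'a"
  assumes alg: "is_K_algebra scale" and sub: "module.subspace scale J"
  shows "module.subspace scale (colon J u)"
proof -
  interpret vector_space scale using alg unfolding is_K_algebra_def by auto
  have scale_left: "scale k (x * y) = scale k x * y" for k x y
    using alg unfolding is_K_algebra_def by metis
  show ?thesis
  proof (rule subspaceI)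
    show "0 \<in> colon J u" using subspace_0[OF sub] by (simp add: colon_def)
    show "x + y \<in> colon J u" if "x \<in> colon J u" "y \<in> colon J u" for x y
      using that subspace_add[OF sub] by (simp add: colon_def distrib_right)
    show "scale c x \<in> colon J u" if "x \<in> colon J u" for c x
      using that subspace_scale[OF sub] by (simp add: colon_def scale_left[symmetric])
  qed
qed

lemma colon_zero: "0 \<in> J \<Longrightarrow> colon J 0 = UNIV"
  by (simp add: colon_def)

text \<open>For a unit u, right multiplication by u maps (J:u) bijectively onto J and fixes 0,
  so (J:u) is {0}, resp. everything, exactly when J is.\<close>

lemma colon_unit_trivial_iff:
  fixes J :: "'a::division_ring set"
  assumes "u \<noteq> 0"
  shows "(colon J u = {0} \<longleftrightarrow> J = {0}) \<and> (colon J u = UNIV \<longleftrightarrow> J = UNIV)"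
proof -
  have to_J: "x \<in> colon J u \<longleftrightarrow> x * u \<in> J" for x by (simp add: colon_def)
  have from_J: "y \<in> J \<longleftrightarrow> y * inverse u \<in> colon J u" for y
    using assms by (simp add: colon_def mult.assoc)
  have "colon J u = {0} \<longleftrightarrow> J = {0}"
  proof
    assume "colon J u = {0}"
    then show "J = {0}" using from_J[of 0] from_J assms by auto
  next
    assume "J = {0}"
    then show "colon J u = {0}" using to_J assms by auto
  qed
  moreover have "colon J u = UNIV \<longleftrightarrow> J = UNIV"
    using to_J from_J by blast
  ultimately show ?thesis ..
qed

text \<open>Write a polynomial relation
  \<Sum> c_i a^i = 0 with lowest nonzero coefficient c_k; cancelling a^k gives
  c_k 1 = -\<Sum>_{i>k} c_i a^(i-k), which lies in L.\<close>

lemma one_in_subspace_of_powers: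
  fixes scale :: "'k::field \<Rightarrow> 'a::ring_1_no_zero_divisors \<Rightarrow> 'a"
  assumes alg: "is_K_algebra scale" and algebraic: "algebraic_algebra scale"
    and sub: "module.subspace scale L" and nonzero: "a \<noteq> 0"
    and powers: "\<forall>m\<ge>1. a ^ m \<in> L"
  shows "1 \<in> L"
proof -
  interpret vector_space scale using alg unfolding is_K_algebra_def by auto
  have scale_right: "scale k (x * y) = x * scale k y" for k x y
    using alg unfolding is_K_algebra_def by metis
  obtain p :: "'k poly" where "p \<noteq> 0"
    and relation: "(\<Sum>i\<le>degree p. scale (coeff p i) (a ^ i)) = 0"
    using algebraic unfolding algebraic_algebra_def by blast
  define c where "c = coeff p"
  define d where "d = degree p"
  define k where "k = (LEAST i. c i \<noteq> 0)"
  have "\<exists>i. c i \<noteq> 0" using \<open>p \<noteq> 0\<close> c_def by (metis leading_coeff_neq_0)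
  then have ck: "c k \<noteq> 0" unfolding k_def by (rule LeastI_ex)
  have below: "c i = 0" if "i < k" for i using that not_less_Least k_def by blast
  have "k \<le> d" using ck c_def d_def le_degree by blast
  define rest where "rest = (\<Sum>i\<in>{k<..d}. scale (c i) (a ^ (i - k)))"
  have "(\<Sum>i\<le>d. scale (c i) (a ^ i)) = (\<Sum>i\<in>{k..d}. scale (c i) (a ^ i))"
    by (rule sum.mono_neutral_right) (use below in auto)
  also have "\<dots> = (\<Sum>i\<in>{k..d}. a ^ k * scale (c i) (a ^ (i - k)))"
  proof (rule sum.cong)
    fix i assume "i \<in> {k..d}"
    then have "a ^ i = a ^ k * a ^ (i - k)" by (simp add: power_add[symmetric])
    then show "scale (c i) (a ^ i) = a ^ k * scale (c i) (a ^ (i - k))"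
      by (simp add: scale_right)
  qed simp
  also have "\<dots> = a ^ k * (\<Sum>i\<in>{k..d}. scale (c i) (a ^ (i - k)))"
    by (simp add: sum_distrib_left)
  finally have "(\<Sum>i\<in>{k..d}. scale (c i) (a ^ (i - k))) = 0"
    using relation nonzero by (simp add: c_def d_def)
  moreover have "{k..d} = insert k {k<..d}" using \<open>k \<le> d\<close> by auto
  ultimately have "scale (c k) 1 + rest = 0" by (simp add: rest_def)
  then have "scale (c k) 1 = - rest" by (simp add: eq_neg_iff_add_eq_0)
  moreover have "rest \<in> L"
    unfolding rest_def using powers by (auto intro!: subspace_sum[OF sub] subspace_scale[OF sub])
  ultimately have "scale (inverse (c k)) (scale (c k) 1) \<in> L"
    by (simp add: subspace_neg[OF sub] subspace_scale[OF sub])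
  then show ?thesis using ck by simp
qed

text \<open>For J = {0} or J = A every colon set is {0} or A, hence both an ideal and Mathieu.\<close>

lemma sigma_tau_trivial:
  fixes scale :: "'k::field \<Rightarrow> 'a::division_ring \<Rightarrow> 'a"
  assumes "is_K_algebra scale" and trivial: "J = {0} \<or> J = UNIV"
  shows "sigma_set th J = UNIV \<and> tau_set th scale J = UNIV"
proof -
  have "module scale" using assms(1) by (rule is_K_algebra_module)
  have "colon J u = {0} \<or> colon J u = UNIV" for u
  proof (cases "u = 0")
    case True
    then show ?thesis using trivial colon_zero[of J] by blast
  next
    case False
    then show ?thesis using trivial colon_unit_trivial_iff[OF False, of J] by blast
  qed
  then have "theta_ideal th (colon J u)" and "theta_mathieu th scale (colon J u)" for u
    by (rule theta_ideal_trivial, rule theta_mathieu_trivial[OF \<open>module scale\<close>])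
  then show ?thesis unfolding sigma_set_def tau_set_def by blast
qed

text \<open>For nonzero proper J only u = 0 gives a theta-ideal (J:u), since for u \<noteq> 0 the set
  (J:u) is again nonzero and proper.\<close>

lemma sigma_proper:
  fixes J :: "'a::division_ring set"
  assumes "0 \<in> J" and "J \<noteq> {0}" and "J \<noteq> UNIV"
  shows "sigma_set th J = {0}"
proof -
  have "theta_ideal th (colon J u) \<longleftrightarrow> u = 0" for u
  proof (cases "u = 0")
    case True
    then show ?thesis using theta_ideal_trivial[of UNIV] colon_zero[OF \<open>0 \<in> J\<close>] by simp
  next
    case False
    then have "colon J u \<noteq> {0}" and "colon J u \<noteq> UNIV"
      using colon_unit_trivial_iff[OF False, of J] assms(2,3) by blast+
    then show ?thesis using theta_ideal_division_ring False by blast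
  qed
  then show ?thesis unfolding sigma_set_def by blast
qed

text \<open>For a proper subspace J, (J:u) is Mathieu exactly when u = 0 or u \<notin> J: if u \<notin> J
  then 1 \<notin> (J:u), so by the key lemma only 0 has its powers in (J:u); if 0 \<noteq> u \<in> J then
  1 lies in the proper subspace (J:u).\<close>

lemma tau_proper:
  fixes scale :: "'k::field \<Rightarrow> 'a::division_ring \<Rightarrow> 'a"
  assumes alg: "is_K_algebra scale" and algebraic: "algebraic_algebra scale"
    and sub: "module.subspace scale J" and "J \<noteq> UNIV"
  shows "tau_set th scale J = (UNIV - J) \<union> {0}"
proof -
  have "module scale" using alg by (rule is_K_algebra_module)
  have "0 \<in> J" using module.subspace_0[OF \<open>module scale\<close> sub] .
  have "theta_mathieu th scale (colon J u) \<longleftrightarrow> u \<in> (UNIV - J) \<union> {0}" for u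
  proof -
    consider "u = 0" | "u \<noteq> 0" "u \<in> J" | "u \<notin> J" by blast
    then show ?thesis
    proof cases
      case 1
      then show ?thesis
        using theta_mathieu_trivial[OF \<open>module scale\<close>] colon_zero[OF \<open>0 \<in> J\<close>] by simp
    next
      case 2
      have "1 \<in> colon J u" using \<open>u \<in> J\<close> by (simp add: colon_def)
      moreover obtain y where "y \<notin> colon J u"
        using colon_unit_trivial_iff[OF \<open>u \<noteq> 0\<close>] \<open>J \<noteq> UNIV\<close> by blast
      ultimately show ?thesis using not_theta_mathieu_if_one 2 by blast
    next
      case 3
      have "a = 0" if "\<forall>m\<ge>1. a ^ m \<in> colon J u" for a
      proof (rule ccontr)
        assume "a \<noteq> 0"
        then have "1 \<in> colon J u"
          using one_in_subspace_of_powers[OF alg algebraic colon_subspace[OF alg sub]] that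
          by blast
        then show False using \<open>u \<notin> J\<close> by (simp add: colon_def)
      qed
      then have "theta_mathieu th scale (colon J u)"
        using theta_mathieu_if_only_zero_powers[OF \<open>module scale\<close> colon_subspace[OF alg sub]]
        by blast
      then show ?thesis using 3 by blast
    qed
  qed
  then show ?thesis unfolding tau_set_def by blast
qed

theorem corollary4p6:
  fixes scale :: "'k::field \<Rightarrow> 'a::division_ring \<Rightarrow> 'a"
    and J :: "'a set" and th :: theta
  assumes "is_K_algebra scale"
    and "algebraic_algebra scale"
    and "module.subspace scale J"
  shows "(J = {0} \<or> J = UNIV \<longrightarrow> sigma_set th J = UNIV \<and> tau_set th scale J = UNIV)
       \<and> (J \<noteq> {0} \<and> J \<noteq> UNIV \<longrightarrow> sigma_set th J = {0} \<and> tau_set th scale J = (UNIV - J) \<union> {0})"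
proof (intro conjI impI)
  assume "J = {0} \<or> J = UNIV"
  then show "sigma_set th J = UNIV" and "tau_set th scale J = UNIV"
    using sigma_tau_trivial[OF assms(1)] by blast+
next
  assume proper: "J \<noteq> {0} \<and> J \<noteq> UNIV"
  have "0 \<in> J" using module.subspace_0[OF is_K_algebra_module[OF assms(1)] assms(3)] .
  then show "sigma_set th J = {0}" using proper by (simp add: sigma_proper)
  show "tau_set th scale J = (UNIV - J) \<union> {0}" using proper by (simp add: tau_proper[OF assms])
qed

end
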